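(* Let $X=\mathbb{Z}$, $\beta\in Sym(X)$ the translation $x\mapsto x+1$, and $n,m\geq1$. Let $c=c(a_1,\dots,a_n,b)$ be a nontrivial cyclically reduced word in the free group $\mathbb{F}_{n+1}=\langle a_1,\dots,a_n,b\rangle$ with exponent sum of $b$ equal to zero, and $d=d(a'_1,\dots,a'_m,b')$ a nontrivial cyclically reduced word in $\mathbb{F}_{m+1}=\langle a'_1,\dots,a'_m,b'\rangle$ with exponent sum of $b'$ equal to zero. Let $\alpha=(\alpha_1,\dots,\alpha_n)\in Sym(X)^n$ be such that, for the action of $\mathbb{F}_{n+1}$ on $X$ given by $a_i\mapsto\alpha_i$, $b\mapsto\beta$, and with $c$ acting as $c(\alpha_1,\dots,\alpha_n,\beta)$: the action is faithful and transitive; for every $w\in\mathbb{F}_{n+1}\setminus\langle c\rangle$ there are infinitely many $x$ with $cx=x$, $cwx=wx$, $wx\neq x$; there is a Følner sequence $(A_k)_{k\geq1}$ for this action consisting of pairwise disjoint sets with $|A_k|=k$, each pointwise fixed by $c$; for every $k\geq1$ there are infinitely many $\langle c\rangle$-orbits of size $k$; every $\langle c\rangle$-orbit is finite; and every finite index subgroup of $\mathbb{F}_{n+1}$ acts transitively. Let $\alpha'=(\alpha'_1,\dots,\alpha'_m)\in Sym(X)^m$ satisfy the same properties for $\mathbb{F}_{m+1}$ (via $a'_j\mapsto\alpha'_j$, $b'\mapsto\beta$) and $d$, with Følner sequence $(B_k)_{k\geq1}$. Let $Z=\{\sigma\in Sym(X):\sigma\, c(\alpha,\beta)=d(\alpha',\beta)\,\sigma\}$,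 a closed subset of $Sym(X)$ (topology of pointwise convergence). For $\sigma\in Z$, let $\Gamma=\mathbb{F}_{n+1}\ast_{c=d}\mathbb{F}_{m+1}$ act on $X$ by $g\cdot x=g(\alpha,\beta)x$ for $g\in\mathbb{F}_{n+1}$ and $h\cdot x=\sigma^{-1}h(\alpha',\beta)\sigma x$ for $h\in\mathbb{F}_{m+1}$. Then the set $\mathcal{O}_1=\{\sigma\in Z:\text{this action of }\Gamma\text{ on }X\text{ is faithful}\}$ is generic in $Z$.
   Context: A subset of a Baire space is meagre if it is a countable union of closed sets with empty interior, and generic (dense $G_\delta$) if its complement is meagre. $Z$ is closed in the Polish space $Sym(X)$, hence a Baire space. A sequence $(A_k)$ of finite non-empty subsets is Følner for an action of $\Gamma$ if $|A_k\triangle gA_k|/|A_k|\to0$ for all $g\in\Gamma$. $\mathbb{F}_{n+1}\ast_{c=d}\mathbb{F}_{m+1}$ denotes the amalgamated free product identifying $\langle c\rangle$ with $\langle d\rangle$ via $c\mapsto d$. *)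

theory Defs
  imports "HOL-Analysis.Analysis"
begin

text \<open>A letter is a pair (generator, sign); sign True means the generator itself,
  False its inverse.  Words are lists of letters; the word l1 l2 ... lk acts on X
  as the composition of the letters, the rightmost letter acting first.\<close>

type_synonym 'g letter = "'g \<times> bool"

definition inv_letter :: "'g letter \<Rightarrow> 'g letter" where
  "inv_letter l = (fst l, \<not> snd l)"

definition inv_word :: "'g letter list \<Rightarrow> 'g letter list" where
  "inv_word w = rev (map inv_letter w)"

definition words_over :: "'g set \<Rightarrow> 'g letter list set" where
  "words_over S = {w. fst ` set w \<subseteq> S}"

definition reduced :: "'g letter list \<Rightarrow> bool" where
  "reduced w \<longleftrightarrow> (\<forall>i. Suc i < length w \<longrightarrow> w ! Suc i \<noteq> inv_letter (w ! i))"

definition cyc_reduced :: "'g letter list \<Rightarrow> bool" where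
  "cyc_reduced w \<longleftrightarrow> reduced w \<and> (w \<noteq> [] \<longrightarrow> last w \<noteq> inv_letter (hd w))"

definition exp_sum :: "'g \<Rightarrow> 'g letter list \<Rightarrow> int" where
  "exp_sum g w = sum_list (map (\<lambda>(h, s). if h = g then (if s then 1 else -1) else 0) w)"

definition fr_step :: "'g letter list \<Rightarrow> 'g letter list \<Rightarrow> bool" where
  "fr_step u v \<longleftrightarrow> (\<exists>p s l. u = p @ [l, inv_letter l] @ s \<and> v = p @ s)"

definition fr_eq :: "'g letter list \<Rightarrow> 'g letter list \<Rightarrow> bool" where
  "fr_eq = (\<lambda>u v. fr_step u v \<or> fr_step v u)\<^sup>*\<^sup>*"

definition in_cyclic :: "'g letter list \<Rightarrow> 'g letter list \<Rightarrow> bool" where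
  "in_cyclic c w \<longleftrightarrow> (\<exists>k::nat. fr_eq w (concat (replicate k c)) \<or>
                                fr_eq w (concat (replicate k (inv_word c))))"

definition is_subgroup :: "'g set \<Rightarrow> 'g letter list set \<Rightarrow> bool" where
  "is_subgroup S H \<longleftrightarrow> H \<subseteq> words_over S \<and> [] \<in> H \<and>
     (\<forall>u\<in>H. \<forall>v\<in>H. u @ v \<in> H) \<and> (\<forall>u\<in>H. inv_word u \<in> H) \<and>
     (\<forall>u\<in>H. \<forall>v\<in>words_over S. fr_eq u v \<longrightarrow> v \<in> H)"

definition finite_index :: "'g set \<Rightarrow> 'g letter list set \<Rightarrow> bool" where
  "finite_index S H \<longleftrightarrow>
     finite (words_over S // {(u, v). u \<in> words_over S \<and> v \<in> words_over S \<and> inv_word u @ v \<in> H})"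

definition beta :: "int \<Rightarrow> int" where
  "beta x = x + 1"

definition letter_perm :: "('g \<Rightarrow> int \<Rightarrow> int) \<Rightarrow> 'g letter \<Rightarrow> int \<Rightarrow> int" where
  "letter_perm \<rho> l = (if snd l then \<rho> (fst l) else inv (\<rho> (fst l)))"

definition eval_word :: "('g \<Rightarrow> int \<Rightarrow> int) \<Rightarrow> 'g letter list \<Rightarrow> int \<Rightarrow> int" where
  "eval_word \<rho> w = foldr (\<lambda>l f. letter_perm \<rho> l \<circ> f) w id"

text \<open>Generators of F_{N+1}: a_i (index i < N) acts by alpha i, b (index N) by beta.\<close>

definition fgen :: "nat \<Rightarrow> (nat \<Rightarrow> int \<Rightarrow> int) \<Rightarrow> nat \<Rightarrow> int \<Rightarrow> int" where
  "fgen N \<alpha> i = (if i < N then \<alpha> i else beta)"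

definition cyc_orbit :: "(int \<Rightarrow> int) \<Rightarrow> int \<Rightarrow> int set" where
  "cyc_orbit p x = {y. \<exists>k::nat. y = (p ^^ k) x \<or> y = (inv p ^^ k) x}"

definition good_action :: "nat \<Rightarrow> (nat \<Rightarrow> int \<Rightarrow> int) \<Rightarrow> nat letter list \<Rightarrow> bool" where
  "good_action N \<rho> c \<longleftrightarrow>
    (let W = words_over {..N}; ev = eval_word \<rho>; pc = ev c in
      \<comment> \<open>faithful\<close>
      (\<forall>w\<in>W. ev w = id \<longrightarrow> fr_eq w []) \<and>
      \<comment> \<open>transitive\<close>
      (\<forall>x y. \<exists>w\<in>W. ev w x = y) \<and>
      (\<forall>w\<in>W. \<not> in_cyclic c w \<longrightarrow>
          infinite {x. pc x = x \<and> pc (ev w x) = ev w x \<and> ev w x \<noteq> x}) \<and>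
      \<comment> \<open>Foelner sequence (A k), k \<ge> 1\<close>
      (\<exists>A :: nat \<Rightarrow> int set.
          (\<forall>k\<ge>1. finite (A k) \<and> card (A k) = k \<and> (\<forall>x\<in>A k. pc x = x)) \<and>
          (\<forall>k l. 1 \<le> k \<longrightarrow> 1 \<le> l \<longrightarrow> k \<noteq> l \<longrightarrow> A k \<inter> A l = {}) \<and>
          (\<forall>w\<in>W. (\<lambda>k. real (card ((A (Suc k) - ev w ` A (Suc k)) \<union> (ev w ` A (Suc k) - A (Suc k))))
                        / real (card (A (Suc k)))) \<longlonglongrightarrow> 0)) \<and>
      (\<forall>k\<ge>1. infinite {Orb. \<exists>x. Orb = cyc_orbit pc x \<and> card Orb = k}) \<and>
      (\<forall>x. finite (cyc_orbit pc x)) \<and>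
      (\<forall>H. is_subgroup {..N} H \<and> finite_index {..N} H \<longrightarrow> (\<forall>x y. \<exists>w\<in>H. ev w x = y)))"

text \<open>Generators Inl i (i \<le> n) of the first factor, Inr j (j \<le> m) of the second.
  Equality in the amalgam: congruence generated by free cancellation and c = d.\<close>

definition emb_l :: "nat letter list \<Rightarrow> (nat + nat) letter list" where
  "emb_l w = map (\<lambda>(g, s). (Inl g, s)) w"

definition emb_r :: "nat letter list \<Rightarrow> (nat + nat) letter list" where
  "emb_r w = map (\<lambda>(g, s). (Inr g, s)) w"

definition amal_step :: "nat letter list \<Rightarrow> nat letter list \<Rightarrow>
    (nat + nat) letter list \<Rightarrow> (nat + nat) letter list \<Rightarrow> bool" where
  "amal_step c d u v \<longleftrightarrow> fr_step u v \<or>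
     (\<exists>p s. u = p @ emb_l c @ s \<and> v = p @ emb_r d @ s)"

definition amal_eq :: "nat letter list \<Rightarrow> nat letter list \<Rightarrow>
    (nat + nat) letter list \<Rightarrow> (nat + nat) letter list \<Rightarrow> bool" where
  "amal_eq c d = (\<lambda>u v. amal_step c d u v \<or> amal_step c d v u)\<^sup>*\<^sup>*"

definition gamma_gen :: "(nat \<Rightarrow> int \<Rightarrow> int) \<Rightarrow> (nat \<Rightarrow> int \<Rightarrow> int) \<Rightarrow> (int \<Rightarrow> int)
    \<Rightarrow> nat + nat \<Rightarrow> int \<Rightarrow> int" where
  "gamma_gen \<rho> \<rho>' \<sigma> g = (case g of Inl i \<Rightarrow> \<rho> i | Inr j \<Rightarrow> inv \<sigma> \<circ> \<rho>' j \<circ> \<sigma>)"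

definition gamma_faithful :: "nat \<Rightarrow> nat \<Rightarrow> (nat \<Rightarrow> int \<Rightarrow> int) \<Rightarrow> (nat \<Rightarrow> int \<Rightarrow> int)
    \<Rightarrow> nat letter list \<Rightarrow> nat letter list \<Rightarrow> (int \<Rightarrow> int) \<Rightarrow> bool" where
  "gamma_faithful n m \<rho> \<rho>' c d \<sigma> \<longleftrightarrow>
     (\<forall>W\<in>words_over (Inl ` {..n} \<union> Inr ` {..m}).
        eval_word (gamma_gen \<rho> \<rho>' \<sigma>) W = id \<longrightarrow> amal_eq c d W [])"

definition symtop :: "(int \<Rightarrow> int) topology" where
  "symtop = subtopology (product_topology (\<lambda>_::int. discrete_topology (UNIV::int set)) UNIV)
                        {\<sigma>. bij \<sigma>}"

definition generic_in :: "'a topology \<Rightarrow> 'a set \<Rightarrow> bool" where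
  "generic_in T S \<longleftrightarrow> S \<subseteq> topspace T \<and>
     (\<exists>F :: nat \<Rightarrow> 'a set. (\<forall>k. closedin T (F k) \<and> T interior_of (F k) = {}) \<and>
         topspace T - S = (\<Union>k. F k))"

end

theory Submission
  imports Defs "HOL-Combinatorics.Transposition"
begin

text \<open>The complement of the set of faithful conjugators is the union, over the countably many words
  W that are nontrivial in the amalgam, of the sets of \<sigma> for which W acts trivially.  Each of these
  is closed, because W x depends on only finitely many values of \<sigma>.  Each has empty interior: write
  W = z s_1 ... s_k with z a power of c and syllables alternating between the factors and lying
  outside the amalgamated subgroup.  If k = 0, faithfulness of the first factor makes the set empty.
  Otherwise choose distinct c-fixed points x_0, ..., x_k outside a given finite set: a syllable g of
  the first factor sends x_i to the c-fixed point g x_i, and a syllable h of the second factor is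
  realised by prescribing \<sigma> to send x_i and the next point to d-fixed points y and h y; the
  displacement hypothesis supplies all these points.  Composing \<sigma> with transpositions of d-fixed
  points meets the finitely many prescriptions without leaving Z or changing \<sigma> on the given finite
  set, and then W maps x_0 to x_k \<noteq> x_0.\<close>

section \<open>Words, free reduction and the amalgam relation\<close>

lemma equivclp_map:
  assumes "\<And>u v. r u v \<Longrightarrow> r' (f u) (f v)" and "equivclp r u v"
  shows "equivclp r' (f u) (f v)"
  using assms(2) by induction (auto intro: equivclp_into_equivclp assms(1))

lemma equivclp_invariant:
  assumes "\<And>u v. r u v \<Longrightarrow> g u = g v" and "equivclp r u v"
  shows "g u = g v"
  using assms(2) by induction (auto dest: assms(1))

lemma fr_eq_equivclp: "fr_eq = equivclp fr_step"
  by (simp add: fr_eq_def equivclp_def symclp_def[abs_def])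

lemma amal_eq_equivclp: "amal_eq c d = equivclp (amal_step c d)"
  by (simp add: amal_eq_def equivclp_def symclp_def[abs_def])

lemma fr_eq_refl [simp]: "fr_eq u u"
  by (simp add: fr_eq_equivclp)

lemma fr_eq_trans [trans]: "fr_eq u v \<Longrightarrow> fr_eq v w \<Longrightarrow> fr_eq u w"
  unfolding fr_eq_equivclp by (rule equivclp_trans)

lemma amal_eq_refl [simp]: "amal_eq c d u u"
  by (simp add: amal_eq_equivclp)

lemma amal_eq_sym: "amal_eq c d u v \<Longrightarrow> amal_eq c d v u"
  unfolding amal_eq_equivclp by (rule equivclp_sym)

lemma amal_eq_trans [trans]: "amal_eq c d u v \<Longrightarrow> amal_eq c d v w \<Longrightarrow> amal_eq c d u w"
  unfolding amal_eq_equivclp by (rule equivclp_trans)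

lemma fr_step_context: "fr_step u v \<Longrightarrow> fr_step (p @ u @ s) (p @ v @ s)"
  unfolding fr_step_def by (metis append.assoc)

lemma amal_step_context: "amal_step c d u v \<Longrightarrow> amal_step c d (p @ u @ s) (p @ v @ s)"
  unfolding amal_step_def using fr_step_context by (metis append.assoc)

lemma fr_eq_context: "fr_eq u v \<Longrightarrow> fr_eq (p @ u @ s) (p @ v @ s)"
  unfolding fr_eq_equivclp by (rule equivclp_map[where f = "\<lambda>w. p @ w @ s"]) (rule fr_step_context)

lemma amal_eq_context: "amal_eq c d u v \<Longrightarrow> amal_eq c d (p @ u @ s) (p @ v @ s)"
  unfolding amal_eq_equivclp by (rule equivclp_map[where f = "\<lambda>w. p @ w @ s"]) (rule amal_step_context)

lemma amal_eq_append:
  assumes "amal_eq c d u u'" and "amal_eq c d v v'"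
  shows "amal_eq c d (u @ v) (u' @ v')"
  using amal_eq_context[OF assms(1), of "[]" v] amal_eq_context[OF assms(2), of u' "[]"]
  by (simp add: amal_eq_trans)

lemma amal_eq_if_fr_eq: "fr_eq u v \<Longrightarrow> amal_eq c d u v"
  using equivclp_map[of fr_step "amal_step c d" id u v]
  by (simp add: fr_eq_equivclp amal_eq_equivclp amal_step_def)

lemma inv_letter_inv_letter [simp]: "inv_letter (inv_letter l) = l"
  by (simp add: inv_letter_def)

lemma inv_word_simps [simp]:
  "inv_word [] = []" "inv_word (l # w) = inv_word w @ [inv_letter l]"
  by (simp_all add: inv_word_def)

lemma fr_eq_cancel_pair: "fr_eq ([l, inv_letter l] @ s) s"
  unfolding fr_eq_equivclp fr_step_def by (rule r_into_equivclp) (metis append_Nil)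

lemma fr_eq_append_inv_word: "fr_eq (w @ inv_word w) []"
proof (induction w)
  case (Cons l w)
  have "fr_eq ((l # w) @ inv_word (l # w)) ([l] @ (w @ inv_word w) @ [inv_letter l])" by simp
  also have "fr_eq \<dots> ([l] @ [] @ [inv_letter l])" by (rule fr_eq_context[OF Cons])
  also have "fr_eq \<dots> []" using fr_eq_cancel_pair[of l "[]"] by simp
  finally show ?case .
qed simp

lemma fr_eq_inv_word_append: "fr_eq (inv_word w @ w) []"
  using fr_eq_append_inv_word[of "inv_word w"]
  by (simp add: inv_word_def rev_map[symmetric] comp_def)

lemma amal_eq_inv_word:
  assumes "amal_eq c d u v"
  shows "amal_eq c d (inv_word u) (inv_word v)"
proof -
  have "amal_eq c d (inv_word u) (inv_word u @ v @ inv_word v)"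
    using amal_eq_context[OF amal_eq_sym[OF amal_eq_if_fr_eq[OF fr_eq_append_inv_word]],
        where p = "inv_word u" and s = "[]"]
    by simp
  also have "amal_eq c d \<dots> (inv_word u @ u @ inv_word v)"
    by (rule amal_eq_context, rule amal_eq_sym, rule assms)
  also have "amal_eq c d \<dots> (inv_word v)"
    using amal_eq_context[OF amal_eq_if_fr_eq[OF fr_eq_inv_word_append],
        where p = "[]" and s = "inv_word v"]
    by simp
  finally show ?thesis .
qed

lemma amal_eq_concat_replicate:
  "amal_eq c d u v \<Longrightarrow> amal_eq c d (concat (replicate k u)) (concat (replicate k v))"
  by (induction k) (auto intro: amal_eq_append)

lemma words_over_simps [simp]:
  "[] \<in> words_over S"
  "l # w \<in> words_over S \<longleftrightarrow> fst l \<in> S \<and> w \<in> words_over S"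
  "u @ w \<in> words_over S \<longleftrightarrow> u \<in> words_over S \<and> w \<in> words_over S"
  by (auto simp: words_over_def)

lemma words_over_inv_word: "w \<in> words_over S \<Longrightarrow> inv_word w \<in> words_over S"
  by (auto simp: words_over_def inv_word_def inv_letter_def)

lemma words_over_concat_replicate:
  "w \<in> words_over S \<Longrightarrow> concat (replicate k w) \<in> words_over S"
  by (induction k) auto

lemma fr_eq_map:
  assumes "\<And>l. f (inv_letter l) = inv_letter (f l)" and "fr_eq u v"
  shows "fr_eq (map f u) (map f v)"
proof -
  have "fr_step (map f u) (map f v)" if step: "fr_step u v" for u v
  proof -
    obtain p s l where "u = p @ [l, inv_letter l] @ s" "v = p @ s"
      using step unfolding fr_step_def by blast
    then have "map f u = map f p @ [f l, inv_letter (f l)] @ map f s" "map f v = map f p @ map f s"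
      by (simp_all add: assms(1))
    then show ?thesis
      unfolding fr_step_def by blast
  qed
  then show ?thesis
    using assms(2) unfolding fr_eq_equivclp by (rule equivclp_map)
qed

lemma emb_l_simps [simp]:
  "emb_l [] = []" "emb_l (l # w) = (Inl (fst l), snd l) # emb_l w" "emb_l (u @ v) = emb_l u @ emb_l v"
  by (auto simp: emb_l_def split: prod.splits)

lemma emb_r_simps [simp]:
  "emb_r [] = []" "emb_r (l # w) = (Inr (fst l), snd l) # emb_r w" "emb_r (u @ v) = emb_r u @ emb_r v"
  by (auto simp: emb_r_def split: prod.splits)

lemma emb_l_inv_word: "emb_l (inv_word w) = inv_word (emb_l w)"
  by (induction w) (auto simp: inv_letter_def)

lemma emb_r_inv_word: "emb_r (inv_word w) = inv_word (emb_r w)"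
  by (induction w) (auto simp: inv_letter_def)

lemma emb_l_fr_eq: "fr_eq u v \<Longrightarrow> fr_eq (emb_l u) (emb_l v)"
  unfolding emb_l_def by (rule fr_eq_map) (auto simp: inv_letter_def)

lemma emb_r_fr_eq: "fr_eq u v \<Longrightarrow> fr_eq (emb_r u) (emb_r v)"
  unfolding emb_r_def by (rule fr_eq_map) (auto simp: inv_letter_def)

definition cyclic_power :: "bool \<Rightarrow> nat \<Rightarrow> 'g letter list \<Rightarrow> 'g letter list" where
  "cyclic_power b k c = concat (replicate k (if b then c else inv_word c))"

lemma in_cyclic_iff_cyclic_power: "in_cyclic c z \<longleftrightarrow> (\<exists>b k. fr_eq z (cyclic_power b k c))"
proof
  assume "in_cyclic c z"
  then obtain k where "fr_eq z (cyclic_power True k c) \<or> fr_eq z (cyclic_power False k c)"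
    by (auto simp: in_cyclic_def cyclic_power_def)
  then show "\<exists>b k. fr_eq z (cyclic_power b k c)" by blast
qed (auto simp: in_cyclic_def cyclic_power_def split: if_splits)

lemma words_over_cyclic_power: "c \<in> words_over S \<Longrightarrow> cyclic_power b k c \<in> words_over S"
  by (simp add: cyclic_power_def words_over_concat_replicate words_over_inv_word)

lemma amal_eq_cyclic_power: "amal_eq c d (emb_l (cyclic_power b k c)) (emb_r (cyclic_power b k d))"
proof -
  have cd: "amal_eq c d (emb_l c) (emb_r d)"
    unfolding amal_eq_equivclp amal_step_def by (rule r_into_equivclp) (metis append_Nil append_Nil2)
  have "amal_eq c d (emb_l (inv_word c)) (emb_r (inv_word d))"
    using amal_eq_inv_word[OF cd] by (simp add: emb_l_inv_word emb_r_inv_word)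
  with cd have "amal_eq c d (emb_l (if b then c else inv_word c)) (emb_r (if b then d else inv_word d))"
    by simp
  moreover have "emb_l (concat (replicate k w)) = concat (replicate k (emb_l w))"
    "emb_r (concat (replicate k w)) = concat (replicate k (emb_r w))" for w :: "nat letter list"
    by (induction k) simp_all
  ultimately show ?thesis
    unfolding cyclic_power_def by (simp add: amal_eq_concat_replicate)
qed

lemma in_cyclic_right_transfer:
  assumes "in_cyclic c z" and "d \<in> words_over S"
  shows "\<exists>z'\<in>words_over S. amal_eq c d (emb_l z) (emb_r z')"
proof -
  obtain b k where "fr_eq z (cyclic_power b k c)"
    using assms(1) unfolding in_cyclic_iff_cyclic_power by blast
  then have "amal_eq c d (emb_l z) (emb_l (cyclic_power b k c))"
    by (intro amal_eq_if_fr_eq emb_l_fr_eq)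
  also have "amal_eq c d \<dots> (emb_r (cyclic_power b k d))"
    by (rule amal_eq_cyclic_power)
  finally show ?thesis
    using words_over_cyclic_power[OF assms(2), of b k] by (rule rev_bexI[rotated])
qed

lemma in_cyclic_left_transfer:
  assumes "in_cyclic d z" and "c \<in> words_over S"
  shows "\<exists>z'\<in>words_over S. in_cyclic c z' \<and> amal_eq c d (emb_r z) (emb_l z')"
proof -
  obtain b k where "fr_eq z (cyclic_power b k d)"
    using assms(1) unfolding in_cyclic_iff_cyclic_power by blast
  then have "amal_eq c d (emb_r z) (emb_r (cyclic_power b k d))"
    by (intro amal_eq_if_fr_eq emb_r_fr_eq)
  also have "amal_eq c d \<dots> (emb_l (cyclic_power b k c))"
    by (rule amal_eq_sym, rule amal_eq_cyclic_power)
  finally have "amal_eq c d (emb_r z) (emb_l (cyclic_power b k c))" .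
  moreover have "in_cyclic c (cyclic_power b k c)"
    unfolding in_cyclic_iff_cyclic_power by (intro exI[of _ b] exI[of _ k] fr_eq_refl)
  ultimately show ?thesis
    using words_over_cyclic_power[OF assms(2), of b k] by blast
qed

section \<open>Normal forms in the amalgam\<close>

definition syllable :: "bool \<times> nat letter list \<Rightarrow> (nat + nat) letter list" where
  "syllable s = (if fst s then emb_l (snd s) else emb_r (snd s))"

definition flat_syllables :: "(bool \<times> nat letter list) list \<Rightarrow> (nat + nat) letter list" where
  "flat_syllables L = concat (map syllable L)"

definition proper_syllable ::
    "nat \<Rightarrow> nat \<Rightarrow> nat letter list \<Rightarrow> nat letter list \<Rightarrow> bool \<times> nat letter list \<Rightarrow> bool" where
  "proper_syllable n m c d s \<longleftrightarrow>
     (if fst s then snd s \<in> words_over {..n} \<and> \<not> in_cyclic c (snd s)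
      else snd s \<in> words_over {..m} \<and> \<not> in_cyclic d (snd s))"

definition reduced_syllables ::
    "nat \<Rightarrow> nat \<Rightarrow> nat letter list \<Rightarrow> nat letter list \<Rightarrow> (bool \<times> nat letter list) list \<Rightarrow> bool" where
  "reduced_syllables n m c d L \<longleftrightarrow>
     successively (\<lambda>s t. fst s \<noteq> fst t) L \<and> (\<forall>s\<in>set L. proper_syllable n m c d s)"

definition has_normal_form ::
    "nat \<Rightarrow> nat \<Rightarrow> nat letter list \<Rightarrow> nat letter list \<Rightarrow> (nat + nat) letter list \<Rightarrow> bool" where
  "has_normal_form n m c d W \<longleftrightarrow> (\<exists>z L. z \<in> words_over {..n} \<and> in_cyclic c z \<and>
     reduced_syllables n m c d L \<and> amal_eq c d W (emb_l z @ flat_syllables L))"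

lemma flat_syllables_simps [simp]:
  "flat_syllables [] = []" "flat_syllables (s # L) = syllable s @ flat_syllables L"
  by (simp_all add: flat_syllables_def)

lemma reduced_syllables_Nil [simp]: "reduced_syllables n m c d []"
  by (simp add: reduced_syllables_def)

lemma reduced_syllables_Cons:
  "reduced_syllables n m c d (s # L) \<longleftrightarrow>
     proper_syllable n m c d s \<and> (L = [] \<or> fst s \<noteq> fst (hd L)) \<and> reduced_syllables n m c d L"
  by (auto simp: reduced_syllables_def successively_Cons)

lemma in_cyclic_Nil: "in_cyclic c []"
  unfolding in_cyclic_def by (rule exI[of _ 0]) simp

lemma has_normal_form_syllable_Cons:
  assumes "c \<in> words_over {..n}" and "snd s \<in> words_over (if fst s then {..n} else {..m})"
    and "reduced_syllables n m c d L"
  shows "has_normal_form n m c d (syllable s @ flat_syllables L)"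
proof -
  have unmerged: "has_normal_form n m c d (syllable s @ flat_syllables L)"
    if "snd s \<in> words_over (if fst s then {..n} else {..m})" "reduced_syllables n m c d L"
      "L = [] \<or> fst s \<noteq> fst (hd L)" for s L
  proof (cases "in_cyclic (if fst s then c else d) (snd s)")
    case True
    obtain z where z: "z \<in> words_over {..n}" "in_cyclic c z" "amal_eq c d (syllable s) (emb_l z)"
    proof (cases "fst s")
      case True
      then show ?thesis
        using that \<open>in_cyclic _ (snd s)\<close> \<open>snd s \<in> _\<close> by (auto simp: syllable_def)
    next
      case False
      then show ?thesis
        using that in_cyclic_left_transfer[OF _ assms(1)] \<open>in_cyclic _ (snd s)\<close>
        by (auto simp: syllable_def)
    qed
    then have "amal_eq c d (syllable s @ flat_syllables L) (emb_l z @ flat_syllables L)"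
      using amal_eq_context[where p = "[]" and s = "flat_syllables L"] by simp
    then show ?thesis
      using z that(2) unfolding has_normal_form_def by blast
  next
    case False
    then have "reduced_syllables n m c d (s # L)"
      using that by (auto simp: reduced_syllables_Cons proper_syllable_def split: if_splits)
    then show ?thesis
      unfolding has_normal_form_def
      by (intro exI[of _ "[]"] exI[of _ "s # L"]) (simp add: in_cyclic_Nil)
  qed
  show ?thesis
  proof (cases "L = [] \<or> fst s \<noteq> fst (hd L)")
    case True
    then show ?thesis using unmerged assms(2,3) by blast
  next
    case False
    then obtain t L' where L: "L = t # L'" "fst t = fst s" by (cases L) auto
    then have "snd t \<in> words_over (if fst s then {..n} else {..m})" "reduced_syllables n m c d L'"
      "L' = [] \<or> fst s \<noteq> fst (hd L')"
      using assms(3) by (auto simp: reduced_syllables_Cons proper_syllable_def split: if_splits)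
    moreover have "syllable s @ flat_syllables L = syllable (fst s, snd s @ snd t) @ flat_syllables L'"
      using L by (simp add: syllable_def)
    ultimately show ?thesis
      using unmerged[of "(fst s, snd s @ snd t)" L'] assms(2) by simp
  qed
qed

lemma normal_form_exists:
  assumes "c \<in> words_over {..n}" and "d \<in> words_over {..m}"
  shows "W \<in> words_over (Inl ` {..n} \<union> Inr ` {..m}) \<Longrightarrow> has_normal_form n m c d W"
proof (induction W)
  case Nil
  show ?case
    unfolding has_normal_form_def
    by (intro exI[of _ "[]"] exI[of _ "[]"]) (simp add: in_cyclic_Nil)
next
  case (Cons l W)
  then obtain z L where zL: "z \<in> words_over {..n}" "in_cyclic c z" "reduced_syllables n m c d L"
    "amal_eq c d W (emb_l z @ flat_syllables L)"
    unfolding has_normal_form_def by auto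
  obtain a e where l: "l = (a, e)" by (cases l)
  obtain s where s: "snd s \<in> words_over (if fst s then {..n} else {..m})"
    "amal_eq c d (l # W) (syllable s @ flat_syllables L)"
  proof (cases a)
    case (Inl i)
    have "amal_eq c d (l # W) ([l] @ emb_l z @ flat_syllables L)"
      using amal_eq_context[OF zL(4), of "[l]" "[]"] by simp
    then show ?thesis
      using that[of "(True, (i, e) # z)"] Cons.prems zL(1) l Inl by (force simp: syllable_def)
  next
    case (Inr j)
    obtain z' where z': "z' \<in> words_over {..m}" "amal_eq c d (emb_l z) (emb_r z')"
      using in_cyclic_right_transfer[OF zL(2) assms(2)] by blast
    have "amal_eq c d (l # W) ([l] @ emb_l z @ flat_syllables L)"
      using amal_eq_context[OF zL(4), of "[l]" "[]"] by simp
    also have "amal_eq c d \<dots> ([l] @ emb_r z' @ flat_syllables L)"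
      by (rule amal_eq_context[OF z'(2)])
    finally show ?thesis
      using that[of "(False, (j, e) # z')"] Cons.prems z'(1) l Inr by (force simp: syllable_def)
  qed
  then show ?case
    using has_normal_form_syllable_Cons[OF assms(1) s(1) zL(3)] amal_eq_trans
    unfolding has_normal_form_def by blast
qed

section \<open>Words acting by permutations\<close>

lemma eval_word_simps [simp]:
  "eval_word \<rho> [] = id" "eval_word \<rho> (l # w) = letter_perm \<rho> l \<circ> eval_word \<rho> w"
  by (simp_all add: eval_word_def)

lemma eval_word_append [simp]: "eval_word \<rho> (u @ v) = eval_word \<rho> u \<circ> eval_word \<rho> v"
  by (induction u) (auto simp: comp_assoc)

lemma bij_beta: "bij beta"
  unfolding beta_def bij_def inj_def surj_def by (auto intro: exI[of _ "_ - 1"])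

lemma bij_fgen: "\<forall>i<N. bij (\<alpha> i) \<Longrightarrow> bij (fgen N \<alpha> i)"
  by (auto simp: fgen_def bij_beta)

lemma bij_eval_word: "(\<And>g. bij (\<rho> g)) \<Longrightarrow> bij (eval_word \<rho> w)"
  by (induction w) (auto intro: bij_comp simp: letter_perm_def bij_imp_bij_inv)

lemma eval_word_fr_eq:
  assumes "\<And>g. bij (\<rho> g)" and "fr_eq u v"
  shows "eval_word \<rho> u = eval_word \<rho> v"
proof -
  have "letter_perm \<rho> l \<circ> letter_perm \<rho> (inv_letter l) = id" for l
    using assms(1) by (cases "snd l")
      (auto simp: letter_perm_def inv_letter_def, metis bij_is_surj surj_iff, metis bij_is_inj inj_iff)
  then have "eval_word \<rho> u = eval_word \<rho> v" if "fr_step u v" for u v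
    using that unfolding fr_step_def by (auto simp: comp_assoc) (metis comp_assoc comp_id)
  then show ?thesis
    using assms(2) unfolding fr_eq_equivclp by (rule equivclp_invariant)
qed

lemma eval_word_in_cyclic_fixpoint:
  assumes "\<And>g. bij (\<rho> g)" and "in_cyclic c z" and "eval_word \<rho> c x = x"
  shows "eval_word \<rho> z x = x"
proof -
  have "eval_word \<rho> (inv_word c) (eval_word \<rho> c x) = x"
    using eval_word_fr_eq[OF assms(1) fr_eq_inv_word_append[of c]] by (simp add: fun_eq_iff)
  then have "eval_word \<rho> (inv_word c) x = x"
    using assms(3) by simp
  then have power: "eval_word \<rho> (cyclic_power b k c) x = x" for b k
    using assms(3) by (induction k) (auto simp: cyclic_power_def)
  obtain b k where "fr_eq z (cyclic_power b k c)"
    using assms(2) unfolding in_cyclic_iff_cyclic_power by blast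
  then have "eval_word \<rho> z = eval_word \<rho> (cyclic_power b k c)"
    by (rule eval_word_fr_eq[OF assms(1)])
  with power show ?thesis
    by simp
qed

lemma bij_gamma_gen:
  "(\<And>i. bij (\<rho> i)) \<Longrightarrow> (\<And>j. bij (\<rho>' j)) \<Longrightarrow> bij \<sigma> \<Longrightarrow> bij (gamma_gen \<rho> \<rho>' \<sigma> g)"
  by (auto simp: gamma_gen_def split: sum.splits intro!: bij_comp bij_imp_bij_inv)

lemma letter_perm_gamma_Inl: "letter_perm (gamma_gen \<rho> \<rho>' \<sigma>) (Inl i, e) = letter_perm \<rho> (i, e)"
  by (simp add: letter_perm_def gamma_gen_def)

lemma eval_word_gamma_emb_l: "eval_word (gamma_gen \<rho> \<rho>' \<sigma>) (emb_l w) = eval_word \<rho> w"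
  by (induction w) (auto simp: letter_perm_gamma_Inl)

lemma letter_perm_gamma_Inr:
  assumes "bij \<sigma>" and "bij (\<rho>' j)"
  shows "letter_perm (gamma_gen \<rho> \<rho>' \<sigma>) (Inr j, e) = inv \<sigma> \<circ> letter_perm \<rho>' (j, e) \<circ> \<sigma>"
  using assms
  by (simp add: letter_perm_def gamma_gen_def o_inv_distrib bij_imp_bij_inv bij_comp inv_inv_eq
      comp_assoc)

lemma eval_word_gamma_emb_r:
  assumes "bij \<sigma>" and "\<And>j. bij (\<rho>' j)"
  shows "eval_word (gamma_gen \<rho> \<rho>' \<sigma>) (emb_r w) = inv \<sigma> \<circ> eval_word \<rho>' w \<circ> \<sigma>"
proof
  fix x
  have "\<sigma> (inv \<sigma> y) = y" for y
    using assms(1) by (simp add: bij_is_surj surj_f_inv_f)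
  then show "eval_word (gamma_gen \<rho> \<rho>' \<sigma>) (emb_r w) x = (inv \<sigma> \<circ> eval_word \<rho>' w \<circ> \<sigma>) x"
    using assms by (induction w) (auto simp: letter_perm_gamma_Inr bij_is_inj)
qed

lemma eval_word_gamma_amal_eq:
  assumes "\<And>i. bij (\<rho> i)" "\<And>j. bij (\<rho>' j)" "bij \<sigma>"
    and "\<sigma> \<circ> eval_word \<rho> c = eval_word \<rho>' d \<circ> \<sigma>" and "amal_eq c d u v"
  shows "eval_word (gamma_gen \<rho> \<rho>' \<sigma>) u = eval_word (gamma_gen \<rho> \<rho>' \<sigma>) v"
proof -
  have gens: "bij (gamma_gen \<rho> \<rho>' \<sigma> g)" for g
    by (rule bij_gamma_gen) (use assms(1-3) in auto)
  have "inv \<sigma> \<circ> \<sigma> = id"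
    using assms(3) by (metis bij_is_inj inj_iff)
  then have "eval_word \<rho> c = inv \<sigma> \<circ> eval_word \<rho>' d \<circ> \<sigma>"
    using assms(4) by (metis comp_assoc comp_id id_comp)
  then have "eval_word (gamma_gen \<rho> \<rho>' \<sigma>) (emb_l c) = eval_word (gamma_gen \<rho> \<rho>' \<sigma>) (emb_r d)"
    by (simp add: eval_word_gamma_emb_l eval_word_gamma_emb_r assms(2,3))
  moreover have "eval_word (gamma_gen \<rho> \<rho>' \<sigma>) u = eval_word (gamma_gen \<rho> \<rho>' \<sigma>) v"
    if "fr_step u v" for u v
    using eval_word_fr_eq[where \<rho> = "gamma_gen \<rho> \<rho>' \<sigma>", OF gens] that
    unfolding fr_eq_equivclp by blast
  ultimately have "eval_word (gamma_gen \<rho> \<rho>' \<sigma>) u = eval_word (gamma_gen \<rho> \<rho>' \<sigma>) v"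
    if "amal_step c d u v" for u v
    using that unfolding amal_step_def by auto
  then show ?thesis
    using assms(5) unfolding amal_eq_equivclp by (rule equivclp_invariant)
qed

section \<open>The topology of pointwise convergence\<close>

lemma openin_pointwise_agreement:
  "finite F \<Longrightarrow> openin (product_topology (\<lambda>_::'a. discrete_topology UNIV) UNIV) {f. \<forall>x\<in>F. f x = g x}"
proof -
  assume "finite F"
  have "{f. \<forall>x\<in>F. f x = g x} = PiE UNIV (\<lambda>x. if x \<in> F then {g x} else UNIV)"
    by (auto simp: PiE_def Pi_def split: if_splits)
  moreover have "finite {x. (if x \<in> F then {g x} else UNIV) \<noteq> UNIV}"
    using \<open>finite F\<close> by (auto intro: finite_subset[of _ F])
  ultimately show ?thesis
    by (simp add: openin_PiE_gen)
qed

lemma topspace_subtopology_symtop: "Z \<subseteq> Collect bij \<Longrightarrow> topspace (subtopology symtop Z) = Z"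
  by (auto simp: symtop_def)

lemma openin_subtopology_symtop_iff:
  assumes "Z \<subseteq> Collect bij"
  shows "openin (subtopology symtop Z) S \<longleftrightarrow>
    S \<subseteq> Z \<and> (\<forall>\<sigma>\<in>S. \<exists>F. finite F \<and> (\<forall>\<sigma>'\<in>Z. (\<forall>x\<in>F. \<sigma>' x = \<sigma> x) \<longrightarrow> \<sigma>' \<in> S))"
    (is "?open \<longleftrightarrow> _ \<and> ?nbhds")
proof -
  let ?P = "product_topology (\<lambda>_::int. discrete_topology (UNIV::int set)) UNIV"
  have sub: "subtopology symtop Z = subtopology ?P Z"
    using assms unfolding symtop_def by (simp add: subtopology_subtopology Int_absorb1)
  show ?thesis
  proof
    assume ?open
    then obtain T where T: "openin ?P T" "S = T \<inter> Z"
      unfolding sub openin_subtopology by blast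
    have "\<exists>F. finite F \<and> (\<forall>\<sigma>'\<in>Z. (\<forall>x\<in>F. \<sigma>' x = \<sigma> x) \<longrightarrow> \<sigma>' \<in> S)" if "\<sigma> \<in> S" for \<sigma>
    proof -
      have "\<sigma> \<in> T"
        using T(2) that by blast
      then obtain V where V: "finite {i. V i \<noteq> UNIV}" "\<sigma> \<in> PiE UNIV V" "PiE UNIV V \<subseteq> T"
        using T(1) unfolding openin_product_topology_alt by auto
      have "\<sigma>' \<in> PiE UNIV V" if "\<forall>x\<in>{i. V i \<noteq> UNIV}. \<sigma>' x = \<sigma> x" for \<sigma>'
        using V(2) that by (auto simp: PiE_def Pi_def) (metis UNIV_I)
      then show ?thesis
        using V(1,3) T(2) by (intro exI[of _ "{i. V i \<noteq> UNIV}"]) blast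
    qed
    then show "S \<subseteq> Z \<and> ?nbhds"
      using T(2) by blast
  next
    assume nbhds: "S \<subseteq> Z \<and> ?nbhds"
    then obtain F where F: "\<forall>\<sigma>\<in>S. finite (F \<sigma>) \<and> (\<forall>\<sigma>'\<in>Z. (\<forall>x\<in>F \<sigma>. \<sigma>' x = \<sigma> x) \<longrightarrow> \<sigma>' \<in> S)"
      by (metis (no_types))
    let ?T = "\<Union>\<sigma>\<in>S. {f. \<forall>x\<in>F \<sigma>. f x = \<sigma> x}"
    have "openin ?P ?T"
      using F openin_pointwise_agreement by blast
    moreover have "S = ?T \<inter> Z"
    proof
      show "S \<subseteq> ?T \<inter> Z"
        using nbhds by blast
      show "?T \<inter> Z \<subseteq> S"
        using F by blast
    qed
    ultimately show ?open
      unfolding sub openin_subtopology by blast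
  qed
qed

lemma eval_word_gamma_locally_constant:
  assumes "bij \<sigma>" and "\<And>j. bij (\<rho>' j)"
  shows "\<exists>F. finite F \<and> (\<forall>\<sigma>'. bij \<sigma>' \<longrightarrow> (\<forall>y\<in>F. \<sigma>' y = \<sigma> y) \<longrightarrow>
           eval_word (gamma_gen \<rho> \<rho>' \<sigma>') W x = eval_word (gamma_gen \<rho> \<rho>' \<sigma>) W x)"
proof (induction W)
  case (Cons l W)
  then obtain F where F: "finite F" "\<And>\<sigma>'. bij \<sigma>' \<Longrightarrow> \<forall>y\<in>F. \<sigma>' y = \<sigma> y \<Longrightarrow>
      eval_word (gamma_gen \<rho> \<rho>' \<sigma>') W x = eval_word (gamma_gen \<rho> \<rho>' \<sigma>) W x"
    by blast
  obtain g e where l: "l = (g, e)" by (cases l)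
  let ?y = "eval_word (gamma_gen \<rho> \<rho>' \<sigma>) W x"
  show ?case
  proof (cases g)
    case (Inl i)
    show ?thesis
      using F by (intro exI[of _ F]) (simp add: l Inl letter_perm_gamma_Inl)
  next
    case (Inr j)
    let ?z = "letter_perm \<rho>' (j, e) (\<sigma> ?y)"
    let ?F = "insert ?y (insert (inv \<sigma> ?z) F)"
    have "eval_word (gamma_gen \<rho> \<rho>' \<sigma>') (l # W) x = eval_word (gamma_gen \<rho> \<rho>' \<sigma>) (l # W) x"
      if \<sigma>': "bij \<sigma>'" "\<forall>y\<in>?F. \<sigma>' y = \<sigma> y" for \<sigma>'
    proof -
      have "\<sigma>' (inv \<sigma> ?z) = ?z"
        using \<sigma>'(2) assms(1) by (simp add: bij_is_surj surj_f_inv_f)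
      then have "inv \<sigma>' ?z = inv \<sigma> ?z"
        using \<sigma>'(1) by (simp add: bij_is_inj inv_f_eq)
      moreover have "eval_word (gamma_gen \<rho> \<rho>' \<sigma>') W x = ?y" "\<sigma>' ?y = \<sigma> ?y"
        using F(2)[OF \<sigma>'(1)] \<sigma>'(2) by auto
      moreover have "letter_perm (gamma_gen \<rho> \<rho>' \<tau>) l = inv \<tau> \<circ> letter_perm \<rho>' (j, e) \<circ> \<tau>"
        if "bij \<tau>" for \<tau>
        unfolding l Inr using that assms(2) by (rule letter_perm_gamma_Inr)
      ultimately show ?thesis
        using \<sigma>'(1) assms(1) by simp
    qed
    moreover have "finite ?F"
      using F(1) by simp
    ultimately show ?thesis
      by blast
  qed
qed (rule exI[of _ "{}"], simp)

lemma closedin_gamma_trivial: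
  assumes "Z \<subseteq> Collect bij" and "\<And>j. bij (\<rho>' j)"
  shows "closedin (subtopology symtop Z) {\<sigma>\<in>Z. eval_word (gamma_gen \<rho> \<rho>' \<sigma>) W = id}"
proof -
  have top: "topspace (subtopology symtop Z) = Z"
    using assms(1) by (rule topspace_subtopology_symtop)
  have "\<exists>F. finite F \<and> (\<forall>\<sigma>'\<in>Z. (\<forall>x\<in>F. \<sigma>' x = \<sigma> x) \<longrightarrow>
      eval_word (gamma_gen \<rho> \<rho>' \<sigma>') W \<noteq> id)"
    if \<sigma>: "\<sigma> \<in> Z" "eval_word (gamma_gen \<rho> \<rho>' \<sigma>) W \<noteq> id" for \<sigma>
  proof -
    obtain x where x: "eval_word (gamma_gen \<rho> \<rho>' \<sigma>) W x \<noteq> x"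
      using \<sigma>(2) by (auto simp: fun_eq_iff)
    have "bij \<sigma>"
      using \<sigma>(1) assms(1) by blast
    then obtain F where "finite F" and F: "\<And>\<sigma>'. bij \<sigma>' \<Longrightarrow> \<forall>y\<in>F. \<sigma>' y = \<sigma> y \<Longrightarrow>
        eval_word (gamma_gen \<rho> \<rho>' \<sigma>') W x = eval_word (gamma_gen \<rho> \<rho>' \<sigma>) W x"
      using eval_word_gamma_locally_constant[of \<sigma> \<rho>' \<rho> W x] assms(2) by blast
    have "eval_word (gamma_gen \<rho> \<rho>' \<sigma>') W \<noteq> id" if "\<sigma>' \<in> Z" "\<forall>y\<in>F. \<sigma>' y = \<sigma> y" for \<sigma>'
      using F[of \<sigma>'] that x assms(1) by (metis id_apply mem_Collect_eq subsetD)
    then show ?thesis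
      using \<open>finite F\<close> by blast
  qed
  then have "openin (subtopology symtop Z) (Z - {\<sigma>\<in>Z. eval_word (gamma_gen \<rho> \<rho>' \<sigma>) W = id})"
    using assms(1) unfolding openin_subtopology_symtop_iff[OF assms(1)] by auto
  then show ?thesis
    unfolding closedin_def top by (auto simp: Diff_Diff_Int Int_absorb1)
qed

section \<open>Prescribing a conjugator on finitely many fixed points\<close>

lemma transpose_comp_commute:
  assumes "inj Q" and "Q u = u" and "Q v = v"
  shows "Transposition.transpose u v \<circ> Q = Q \<circ> Transposition.transpose u v"
proof
  fix x
  have "Q x = u \<longleftrightarrow> x = u" "Q x = v \<longleftrightarrow> x = v"
    using assms by (metis injD)+
  then show "(Transposition.transpose u v \<circ> Q) x = (Q \<circ> Transposition.transpose u v) x"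
    using assms(2,3) by (auto simp: Transposition.transpose_def)
qed

text \<open>Post-composing with a transposition of two Q-fixed points preserves the identity
  \<sigma> \<circ> P = Q \<circ> \<sigma>, so the prescriptions in A can be realised one at a time.\<close>

lemma conjugator_prescribed_on_fixpoints:
  assumes "bij \<sigma>" and "\<sigma> \<circ> P = Q \<circ> \<sigma>" and "inj Q"
  shows "distinct (map fst A) \<Longrightarrow> distinct (map snd A) \<Longrightarrow>
    \<forall>(a, b)\<in>set A. P a = a \<and> Q b = b \<and> a \<notin> F \<and> b \<notin> \<sigma> ` F \<Longrightarrow>
    \<exists>\<sigma>'. bij \<sigma>' \<and> \<sigma>' \<circ> P = Q \<circ> \<sigma>' \<and> (\<forall>x\<in>F. \<sigma>' x = \<sigma> x) \<and> (\<forall>(a, b)\<in>set A. \<sigma>' a = b)"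
proof (induction A)
  case Nil
  show ?case using assms(1,2) by (intro exI[of _ \<sigma>]) simp
next
  case (Cons p A)
  obtain a b where p: "p = (a, b)" by (cases p)
  have "distinct (map fst A)" "distinct (map snd A)"
    "\<forall>(a, b)\<in>set A. P a = a \<and> Q b = b \<and> a \<notin> F \<and> b \<notin> \<sigma> ` F"
    using Cons.prems by auto
  then obtain \<sigma>1 where \<sigma>1: "bij \<sigma>1" "\<sigma>1 \<circ> P = Q \<circ> \<sigma>1" "\<forall>x\<in>F. \<sigma>1 x = \<sigma> x"
    "\<forall>(a, b)\<in>set A. \<sigma>1 a = b"
    using Cons.IH by blast
  have ab: "P a = a" "Q b = b" "a \<notin> F" "b \<notin> \<sigma> ` F" "a \<notin> fst ` set A" "b \<notin> snd ` set A"
    using Cons.prems p by auto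
  have "Q (\<sigma>1 a) = \<sigma>1 a"
    using fun_cong[OF \<sigma>1(2), of a] ab(1) by simp
  define t where "t = Transposition.transpose (\<sigma>1 a) b"
  have commute: "t \<circ> Q = Q \<circ> t"
    unfolding t_def using transpose_comp_commute[OF assms(3)] ab(2) \<open>Q (\<sigma>1 a) = \<sigma>1 a\<close> by blast
  have t_other: "t z = z" if "z \<noteq> \<sigma>1 a" "z \<noteq> b" for z
    unfolding t_def using that by simp
  have inj1: "inj \<sigma>1"
    using \<sigma>1(1) bij_is_inj by blast
  show ?case
  proof (intro exI[of _ "t \<circ> \<sigma>1"] conjI)
    show "bij (t \<circ> \<sigma>1)"
      unfolding t_def using \<sigma>1(1) by (simp add: bij_comp)
    have "(t \<circ> \<sigma>1) \<circ> P = (t \<circ> Q) \<circ> \<sigma>1"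
      using \<sigma>1(2) by (simp add: comp_assoc)
    then show "(t \<circ> \<sigma>1) \<circ> P = Q \<circ> (t \<circ> \<sigma>1)"
      by (simp add: commute comp_assoc)
    show "\<forall>x\<in>F. (t \<circ> \<sigma>1) x = \<sigma> x"
    proof
      fix x assume "x \<in> F"
      then have "\<sigma>1 x \<noteq> \<sigma>1 a" "\<sigma>1 x \<noteq> b"
        using \<sigma>1(3) ab(3,4) inj1 by (auto simp: inj_eq)
      then show "(t \<circ> \<sigma>1) x = \<sigma> x"
        using \<sigma>1(3) \<open>x \<in> F\<close> t_other by simp
    qed
    have "t (\<sigma>1 a') = b'" if "(a', b') \<in> set A" for a' b'
    proof -
      have "\<sigma>1 a' = b'" "a' \<noteq> a" "b' \<noteq> b"
        using that \<sigma>1(4) ab(5,6) by (auto simp: image_iff)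
      then show ?thesis
        using inj1 t_other by (auto simp: inj_eq)
    qed
    moreover have "t (\<sigma>1 a) = b"
      unfolding t_def by simp
    ultimately show "\<forall>(a', b')\<in>set (p # A). (t \<circ> \<sigma>1) a' = b'"
      using p by auto
  qed
qed

section \<open>Paths through fixed points\<close>

definition displaced :: "('a \<Rightarrow> 'a) \<Rightarrow> ('a \<Rightarrow> 'a) \<Rightarrow> 'a set" where
  "displaced P f = {x. P x = x \<and> P (f x) = f x \<and> f x \<noteq> x}"

text \<open>The list ws records the points visited by a sequence of syllables
  in reverse order: the path starts at last ws and ends at hd ws.\<close>

context
  fixes E E' :: "'w \<Rightarrow> 'a \<Rightarrow> 'a"
begin

definition syllable_step :: "('a \<times> 'a) list \<Rightarrow> bool \<times> 'w \<Rightarrow> 'a \<Rightarrow> 'a \<Rightarrow> bool" where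
  "syllable_step A s a b \<longleftrightarrow>
     (if fst s then E (snd s) a = b else (\<exists>y. (a, y) \<in> set A \<and> (b, E' (snd s) y) \<in> set A))"

fun syllable_path :: "('a \<times> 'a) list \<Rightarrow> (bool \<times> 'w) list \<Rightarrow> 'a list \<Rightarrow> bool" where
  "syllable_path A [] ws \<longleftrightarrow> (\<exists>w. ws = [w])"
| "syllable_path A (s # L) ws \<longleftrightarrow>
     (\<exists>w ws'. ws = w # ws' \<and> syllable_step A s (hd ws') w \<and> syllable_path A L ws')"

lemma syllable_path_not_Nil: "syllable_path A L ws \<Longrightarrow> ws \<noteq> []"
  by (cases L) auto

lemma syllable_step_mono: "syllable_step A s a b \<Longrightarrow> set A \<subseteq> set A' \<Longrightarrow> syllable_step A' s a b"
  by (auto simp: syllable_step_def split: if_splits)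

lemma syllable_path_mono: "syllable_path A L ws \<Longrightarrow> set A \<subseteq> set A' \<Longrightarrow> syllable_path A' L ws"
  by (induction L arbitrary: ws) (simp, metis syllable_path.simps(2) syllable_step_mono)

definition good_path ::
    "('a \<Rightarrow> 'a) \<Rightarrow> ('a \<Rightarrow> 'a) \<Rightarrow> 'a set \<Rightarrow> 'a set \<Rightarrow> ('a \<times> 'a) list \<Rightarrow> (bool \<times> 'w) list \<Rightarrow> 'a list \<Rightarrow> bool"
  where
  "good_path P Q S S' A L ws \<longleftrightarrow> syllable_path A L ws \<and> distinct ws \<and> set ws \<subseteq> {x. P x = x} - S \<and>
     fst ` set A \<subseteq> set ws \<and> snd ` set A \<subseteq> {y. Q y = y} - S' \<and>
     distinct (map fst A) \<and> distinct (map snd A)"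

lemma good_path_Nil: "P w = w \<Longrightarrow> w \<notin> S \<Longrightarrow> good_path P Q S S' [] [] [w]"
  by (simp add: good_path_def)

lemma good_path_Cons_left:
  assumes "good_path P Q S S' A L ws" and "v = E g (hd ws)" and "P v = v" and "v \<notin> set ws \<union> S"
  shows "good_path P Q S S' A ((True, g) # L) (v # ws)"
  using assms syllable_path_not_Nil by (auto simp: good_path_def syllable_step_def)

lemma good_path_Cons_right:
  assumes "good_path P Q S S' A L ws" and "hd ws \<notin> fst ` set A"
    and "Q y = y" and "Q (E' h y) = E' h y" and "E' h y \<noteq> y"
    and "y \<notin> S' \<union> snd ` set A" and "E' h y \<notin> S' \<union> snd ` set A"
    and "P v = v" and "v \<notin> set ws \<union> S"
  shows "good_path P Q S S' ((hd ws, y) # (v, E' h y) # A) ((False, h) # L) (v # ws)"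
proof -
  have "syllable_path ((hd ws, y) # (v, E' h y) # A) L ws"
    using assms(1) syllable_path_mono unfolding good_path_def by (metis set_subset_Cons subset_trans)
  moreover have "hd ws \<in> set ws" "hd ws \<noteq> v"
    using assms(1,9) syllable_path_not_Nil unfolding good_path_def by auto
  ultimately show ?thesis
    using assms by (auto simp: good_path_def syllable_step_def)
qed

lemma good_path_prescriptions:
  assumes "good_path P Q S S' A L ws"
  shows "\<forall>(a, b)\<in>set A. P a = a \<and> Q b = b \<and> a \<notin> S \<and> b \<notin> S'"
proof clarify
  fix a b assume "(a, b) \<in> set A"
  then have "a \<in> fst ` set A" "b \<in> snd ` set A"
    by force+
  then show "P a = a \<and> Q b = b \<and> a \<notin> S \<and> b \<notin> S'"
    using assms unfolding good_path_def by blast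
qed

lemma good_path_end_points:
  assumes "good_path P Q S S' A L ws" and "L \<noteq> []"
  shows "hd ws \<noteq> last ws" and "P (hd ws) = hd ws"
proof -
  have "distinct ws" "set ws \<subseteq> {x. P x = x}" and path: "syllable_path A L ws"
    using assms(1) unfolding good_path_def by auto
  then show "hd ws \<noteq> last ws"
    using assms(2) by (cases L) (auto simp: syllable_path_not_Nil)
  have "hd ws \<in> set ws"
    using syllable_path_not_Nil[OF path] by simp
  then show "P (hd ws) = hd ws"
    using \<open>set ws \<subseteq> _\<close> by blast
qed

text \<open>The set G T of admissible end points, given the other points T of the path, lets the
  caller steer the end point towards the points displaced by the syllable prepended next.\<close>

definition good_path_ending ::
    "('a \<Rightarrow> 'a) \<Rightarrow> ('a \<Rightarrow> 'a) \<Rightarrow> 'a set \<Rightarrow> 'a set \<Rightarrow> ('a set \<Rightarrow> 'a set) \<Rightarrow> (bool \<times> 'w) list \<Rightarrow> bool"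
  where
  "good_path_ending P Q S S' G L \<longleftrightarrow> (\<exists>ws A. good_path P Q S S' A L ws \<and>
     ((L = [] \<or> \<not> fst (hd L)) \<longrightarrow> hd ws \<in> G (set (tl ws))) \<and>
     ((L = [] \<or> fst (hd L)) \<longrightarrow> hd ws \<notin> fst ` set A))"

lemma good_path_ending_Nil:
  assumes "finite S" and "infinite (G {})" and "G {} \<subseteq> {x. P x = x}"
  shows "good_path_ending P Q S S' G []"
proof -
  obtain w where "w \<in> G {} - S"
    using Diff_infinite_finite[OF assms(1,2)] infinite_imp_nonempty by blast
  then show ?thesis
    unfolding good_path_ending_def using good_path_Nil[of P w S Q S'] assms(3)
    by (intro exI[of _ "[w]"] exI[of _ "[]"]) auto
qed

lemma good_path_ending_Cons_left:
  assumes "good_path_ending P Q S S' (\<lambda>T. displaced P (E g) - (T \<union> S \<union> E g -` (T \<union> S))) L"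
    and "L = [] \<or> \<not> fst (hd L)"
  shows "good_path_ending P Q S S' G ((True, g) # L)"
proof -
  obtain ws A where path: "good_path P Q S S' A L ws"
    and "hd ws \<in> displaced P (E g) - (set (tl ws) \<union> S \<union> E g -` (set (tl ws) \<union> S))"
    using assms unfolding good_path_ending_def by blast
  then have v: "P (E g (hd ws)) = E g (hd ws)" "E g (hd ws) \<noteq> hd ws"
    "E g (hd ws) \<notin> set (tl ws) \<union> S"
    unfolding displaced_def by auto
  moreover have "ws = hd ws # tl ws"
    using path syllable_path_not_Nil unfolding good_path_def by (metis list.collapse)
  ultimately have "E g (hd ws) \<notin> set ws \<union> S"
    by (metis Un_iff set_ConsD)
  moreover have "fst ` set A \<subseteq> set ws"
    using path unfolding good_path_def by blast
  ultimately show ?thesis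
    unfolding good_path_ending_def using good_path_Cons_left[OF path refl v(1)]
    by (intro exI[of _ "E g (hd ws) # ws"] exI[of _ A]) auto
qed

lemma good_path_ending_Cons_right:
  assumes "good_path_ending P Q S S' (\<lambda>T. {x. P x = x} - (T \<union> S)) L" and "L = [] \<or> fst (hd L)"
    and "inj (E' h)" and "infinite (displaced Q (E' h))" and "finite S" and "finite S'"
    and "\<And>T. finite T \<Longrightarrow> infinite (G T)" and "\<And>T. G T \<subseteq> {x. P x = x}"
  shows "good_path_ending P Q S S' G ((False, h) # L)"
proof -
  obtain ws A where path: "good_path P Q S S' A L ws" and hd_ws: "hd ws \<notin> fst ` set A"
    using assms(1,2) unfolding good_path_ending_def by blast
  define B where "B = S' \<union> snd ` set A"
  have "finite B"
    unfolding B_def using \<open>finite S'\<close> by blast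
  then have "finite (B \<union> E' h -` B)"
    using finite_vimageI[OF _ assms(3)] by blast
  then obtain y where "y \<in> displaced Q (E' h) - (B \<union> E' h -` B)"
    using Diff_infinite_finite[OF _ assms(4)] infinite_imp_nonempty by (metis ex_in_conv)
  then have y: "Q y = y" "Q (E' h y) = E' h y" "E' h y \<noteq> y" "y \<notin> B" "E' h y \<notin> B"
    unfolding displaced_def by auto
  have "finite (set ws \<union> S)"
    using \<open>finite S\<close> by blast
  then obtain v where v: "v \<in> G (set ws) - (set ws \<union> S)"
    using Diff_infinite_finite[OF _ assms(7)[of "set ws"]] infinite_imp_nonempty
    by (metis List.finite_set ex_in_conv)
  then have "P v = v"
    using assms(8) by blast
  have "good_path P Q S S' ((hd ws, y) # (v, E' h y) # A) ((False, h) # L) (v # ws)"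
    using good_path_Cons_right[OF path hd_ws y(1-3) _ _ \<open>P v = v\<close>] y(4,5) v
    unfolding B_def by blast
  then show ?thesis
    unfolding good_path_ending_def using v
    by (intro exI[of _ "v # ws"] exI[of _ "(hd ws, y) # (v, E' h y) # A"]) auto
qed

lemma good_path_ending_exists:
  assumes inj: "\<And>w. inj (E w)" "\<And>w. inj (E' w)" and inf_fix: "infinite {x. P x = x}"
    and "finite S" and "finite S'"
  shows "successively (\<lambda>s t. fst s \<noteq> fst t) L \<Longrightarrow>
    \<forall>s\<in>set L. infinite (if fst s then displaced P (E (snd s)) else displaced Q (E' (snd s))) \<Longrightarrow>
    (\<And>T. finite T \<Longrightarrow> infinite (G T)) \<Longrightarrow> (\<And>T. G T \<subseteq> {x. P x = x}) \<Longrightarrow>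
    good_path_ending P Q S S' G L"
proof (induction L arbitrary: G)
  case Nil
  show ?case
    by (rule good_path_ending_Nil[where G = G, OF \<open>finite S\<close> Nil.prems(3)[OF finite.emptyI] Nil.prems(4)[of "{}"]])
next
  case (Cons s L)
  obtain b g where s: "s = (b, g)" by (cases s)
  have alt: "successively (\<lambda>s t. fst s \<noteq> fst t) L" and hd_L: "L = [] \<or> fst (hd L) \<noteq> b"
    using Cons.prems(1) s by (auto simp: successively_Cons)
  have displ: "\<forall>s\<in>set L. infinite (if fst s then displaced P (E (snd s)) else displaced Q (E' (snd s)))"
    and displ_g: "infinite (if b then displaced P (E g) else displaced Q (E' g))"
    using Cons.prems(2) s by auto
  show ?case
  proof (cases b)
    case True
    let ?G = "\<lambda>T. displaced P (E g) - (T \<union> S \<union> E g -` (T \<union> S))"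
    have "good_path_ending P Q S S' ?G L"
    proof (rule Cons.IH[OF alt displ])
      show "infinite (?G T)" if "finite T" for T
        using that \<open>finite S\<close> finite_vimageI[OF _ inj(1)] displ_g True
        by (intro Diff_infinite_finite) auto
      show "?G T \<subseteq> {x. P x = x}" for T
        unfolding displaced_def by auto
    qed
    moreover have "L = [] \<or> \<not> fst (hd L)"
      using hd_L True by auto
    ultimately have "good_path_ending P Q S S' G ((True, g) # L)"
      by (rule good_path_ending_Cons_left)
    then show ?thesis
      using s True by simp
  next
    case False
    let ?G = "\<lambda>T. {x. P x = x} - (T \<union> S)"
    have "good_path_ending P Q S S' ?G L"
    proof (rule Cons.IH[OF alt displ])
      show "infinite (?G T)" if "finite T" for T
        using that \<open>finite S\<close> inf_fix by (intro Diff_infinite_finite) auto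
    qed auto
    moreover have "L = [] \<or> fst (hd L)"
      using hd_L False by auto
    moreover have "infinite (displaced Q (E' g))"
      using displ_g False by simp
    ultimately have "good_path_ending P Q S S' G ((False, g) # L)"
      by (rule good_path_ending_Cons_right[OF _ _ inj(2) _ \<open>finite S\<close> \<open>finite S'\<close> Cons.prems(3,4)])
    then show ?thesis
      using s False by simp
  qed
qed

end

lemma syllable_path_eval:
  assumes "\<And>s. eval_word \<rho> (syllable s) = (if fst s then E (snd s) else inv \<tau> \<circ> E' (snd s) \<circ> \<tau>)"
    and "inj \<tau>" and "\<forall>(a, b)\<in>set A. \<tau> a = b"
  shows "syllable_path E E' A L ws \<Longrightarrow> eval_word \<rho> (flat_syllables L) (last ws) = hd ws"
proof (induction L arbitrary: ws)
  case (Cons s L)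
  then obtain w ws' where ws: "ws = w # ws'" "syllable_step E E' A s (hd ws') w"
    "syllable_path E E' A L ws'"
    by auto
  have "eval_word \<rho> (syllable s) (hd ws') = w"
  proof (cases "fst s")
    case True
    then show ?thesis
      using assms(1)[of s] ws(2) by (simp add: syllable_step_def)
  next
    case False
    then obtain y where "(hd ws', y) \<in> set A" "(w, E' (snd s) y) \<in> set A"
      using ws(2) by (auto simp: syllable_step_def)
    then have "\<tau> (hd ws') = y" "E' (snd s) y = \<tau> w"
      using assms(3) by auto
    then show ?thesis
      using assms(1)[of s] False inv_f_f[OF assms(2)] by simp
  qed
  then show ?case
    using Cons.IH[OF ws(3)] ws(1) syllable_path_not_Nil[OF ws(3)] by simp
qed auto

section \<open>Faithful actions of the amalgam are generic\<close>

locale amalgam_conjugation =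
  fixes n m :: nat and \<rho> \<rho>' :: "nat \<Rightarrow> int \<Rightarrow> int" and c d :: "nat letter list"
  assumes bij_\<rho>: "\<And>i. bij (\<rho> i)" and bij_\<rho>': "\<And>j. bij (\<rho>' j)"
    and c_word: "c \<in> words_over {..n}" and d_word: "d \<in> words_over {..m}"
    and faithful: "\<And>w. w \<in> words_over {..n} \<Longrightarrow> eval_word \<rho> w = id \<Longrightarrow> fr_eq w []"
    and displaced_c: "\<And>w. w \<in> words_over {..n} \<Longrightarrow> \<not> in_cyclic c w \<Longrightarrow>
      infinite (displaced (eval_word \<rho> c) (eval_word \<rho> w))"
    and displaced_d: "\<And>w. w \<in> words_over {..m} \<Longrightarrow> \<not> in_cyclic d w \<Longrightarrow>
      infinite (displaced (eval_word \<rho>' d) (eval_word \<rho>' w))"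
begin

definition conjugators :: "(int \<Rightarrow> int) set" where
  "conjugators = {\<sigma>. bij \<sigma> \<and> \<sigma> \<circ> eval_word \<rho> c = eval_word \<rho>' d \<circ> \<sigma>}"

abbreviation act :: "(int \<Rightarrow> int) \<Rightarrow> (nat + nat) letter list \<Rightarrow> int \<Rightarrow> int" where
  "act \<sigma> \<equiv> eval_word (gamma_gen \<rho> \<rho>' \<sigma>)"

lemma conjugators_bij: "conjugators \<subseteq> Collect bij"
  unfolding conjugators_def by blast

lemma act_amal_eq: "\<sigma> \<in> conjugators \<Longrightarrow> amal_eq c d u v \<Longrightarrow> act \<sigma> u = act \<sigma> v"
  unfolding conjugators_def by (blast intro: eval_word_gamma_amal_eq bij_\<rho> bij_\<rho>')

lemma fixpoints_conjugate:
  assumes "\<sigma> \<in> conjugators"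
  shows "{y. eval_word \<rho>' d y = y} \<subseteq> \<sigma> ` {x. eval_word \<rho> c x = x}"
proof
  fix y assume "y \<in> {y. eval_word \<rho>' d y = y}"
  have "bij \<sigma>" and conj: "\<sigma> (eval_word \<rho> c x) = eval_word \<rho>' d (\<sigma> x)" for x
    using assms unfolding conjugators_def by (auto simp: fun_eq_iff)
  then have "\<sigma> (inv \<sigma> y) = y"
    by (simp add: bij_is_surj surj_f_inv_f)
  then have "\<sigma> (eval_word \<rho> c (inv \<sigma> y)) = \<sigma> (inv \<sigma> y)"
    using conj[of "inv \<sigma> y"] \<open>y \<in> _\<close> by simp
  then have "eval_word \<rho> c (inv \<sigma> y) = inv \<sigma> y"
    using \<open>bij \<sigma>\<close> by (simp add: bij_is_inj inj_eq)
  then show "y \<in> \<sigma> ` {x. eval_word \<rho> c x = x}"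
    using \<open>\<sigma> (inv \<sigma> y) = y\<close> by (metis (mono_tags) image_eqI mem_Collect_eq)
qed

lemma act_syllable:
  "\<sigma> \<in> conjugators \<Longrightarrow> act \<sigma> (syllable s) =
     (if fst s then eval_word \<rho> (snd s) else inv \<sigma> \<circ> eval_word \<rho>' (snd s) \<circ> \<sigma>)"
  unfolding conjugators_def syllable_def
  by (simp add: eval_word_gamma_emb_l eval_word_gamma_emb_r bij_\<rho>')

lemma infinite_fixpoints:
  assumes "\<sigma> \<in> conjugators" and "reduced_syllables n m c d L" and "L \<noteq> []"
  shows "infinite {x. eval_word \<rho> c x = x}"
proof -
  obtain s where s: "s \<in> set L" "proper_syllable n m c d s"
    using assms(2,3) unfolding reduced_syllables_def by (metis last_in_set)
  show ?thesis
  proof (cases "fst s")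
    case True
    then have "infinite (displaced (eval_word \<rho> c) (eval_word \<rho> (snd s)))"
      using s(2) displaced_c unfolding proper_syllable_def by simp
    then show ?thesis
      by (rule infinite_super[rotated]) (auto simp: displaced_def)
  next
    case False
    then have "infinite (displaced (eval_word \<rho>' d) (eval_word \<rho>' (snd s)))"
      using s(2) displaced_d unfolding proper_syllable_def by simp
    then have "infinite {y. eval_word \<rho>' d y = y}"
      by (rule infinite_super[rotated]) (auto simp: displaced_def)
    then show ?thesis
      using fixpoints_conjugate[OF assms(1)] finite_surj by blast
  qed
qed

lemma conjugator_perturbation:
  assumes \<sigma>: "\<sigma> \<in> conjugators" and "finite F" and L: "reduced_syllables n m c d L" "L \<noteq> []"
  shows "\<exists>\<sigma>'\<in>conjugators. (\<forall>x\<in>F. \<sigma>' x = \<sigma> x) \<and>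
    (\<exists>x y. act \<sigma>' (flat_syllables L) x = y \<and> y \<noteq> x \<and> eval_word \<rho> c y = y)"
proof -
  let ?P = "eval_word \<rho> c" and ?Q = "eval_word \<rho>' d"
  have "bij \<sigma>" "\<sigma> \<circ> ?P = ?Q \<circ> \<sigma>"
    using \<sigma> unfolding conjugators_def by auto
  have inj: "inj (eval_word \<rho> w)" "inj (eval_word \<rho>' w)" for w
    using bij_eval_word bij_\<rho> bij_\<rho>' bij_is_inj by blast+
  have displ: "\<forall>s\<in>set L. infinite (if fst s then displaced ?P (eval_word \<rho> (snd s))
      else displaced ?Q (eval_word \<rho>' (snd s)))"
    using L(1) displaced_c displaced_d
    unfolding reduced_syllables_def proper_syllable_def by auto
  have alt: "successively (\<lambda>s t. fst s \<noteq> fst t) L"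
    using L(1) unfolding reduced_syllables_def by blast
  have "good_path_ending (eval_word \<rho>) (eval_word \<rho>') ?P ?Q F (\<sigma> ` F) (\<lambda>_. {x. ?P x = x}) L"
    by (rule good_path_ending_exists[where E = "eval_word \<rho>" and E' = "eval_word \<rho>'",
          OF inj infinite_fixpoints[OF \<sigma> L] \<open>finite F\<close> finite_imageI[OF \<open>finite F\<close>] alt displ])
      (use infinite_fixpoints[OF \<sigma> L] in auto)
  then obtain ws A where path: "good_path (eval_word \<rho>) (eval_word \<rho>') ?P ?Q F (\<sigma> ` F) A L ws"
    unfolding good_path_ending_def by blast
  then have spath: "syllable_path (eval_word \<rho>) (eval_word \<rho>') A L ws"
    and A: "distinct (map fst A)" "distinct (map snd A)"
    unfolding good_path_def by auto
  obtain \<sigma>' where "bij \<sigma>'" "\<sigma>' \<circ> ?P = ?Q \<circ> \<sigma>'" and agree: "\<forall>x\<in>F. \<sigma>' x = \<sigma> x"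
    and prescribed: "\<forall>(a, b)\<in>set A. \<sigma>' a = b"
    using conjugator_prescribed_on_fixpoints[OF \<open>bij \<sigma>\<close> \<open>\<sigma> \<circ> ?P = ?Q \<circ> \<sigma>\<close> inj(2) A
        good_path_prescriptions[OF path]]
    by blast
  then have \<sigma>': "\<sigma>' \<in> conjugators"
    unfolding conjugators_def by blast
  have "act \<sigma>' (flat_syllables L) (last ws) = hd ws"
    by (rule syllable_path_eval[OF act_syllable[OF \<sigma>'] bij_is_inj[OF \<open>bij \<sigma>'\<close>] prescribed spath])
  then show ?thesis
    using \<sigma>' agree good_path_end_points[OF path L(2)]
    by (intro bexI[of _ \<sigma>'] conjI exI[of _ "last ws"] exI[of _ "hd ws"]) auto
qed

lemma conjugator_perturbation_normal_form:
  assumes "\<sigma> \<in> conjugators" and "finite F" and "in_cyclic c z"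
    and "reduced_syllables n m c d L" and "L \<noteq> []"
  shows "\<exists>\<sigma>'\<in>conjugators. (\<forall>x\<in>F. \<sigma>' x = \<sigma> x) \<and> act \<sigma>' (emb_l z @ flat_syllables L) \<noteq> id"
proof -
  obtain \<sigma>' x y where "\<sigma>' \<in> conjugators" "\<forall>x\<in>F. \<sigma>' x = \<sigma> x"
    and xy: "act \<sigma>' (flat_syllables L) x = y" "y \<noteq> x" "eval_word \<rho> c y = y"
    using conjugator_perturbation[OF assms(1,2,4,5)] by blast
  have "act \<sigma>' (emb_l z @ flat_syllables L) x = y"
    using eval_word_in_cyclic_fixpoint[OF bij_\<rho> assms(3) xy(3)] xy(1)
    by (simp add: eval_word_gamma_emb_l)
  then have "act \<sigma>' (emb_l z @ flat_syllables L) \<noteq> id"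
    using xy(2) by (metis id_apply)
  with \<open>\<sigma>' \<in> conjugators\<close> \<open>\<forall>x\<in>F. \<sigma>' x = \<sigma> x\<close> show ?thesis
    by blast
qed

lemma interior_act_trivial_empty:
  assumes W: "W \<in> words_over (Inl ` {..n} \<union> Inr ` {..m})" "\<not> amal_eq c d W []"
  shows "subtopology symtop conjugators interior_of {\<sigma>\<in>conjugators. act \<sigma> W = id} = {}"
proof -
  obtain z L where z: "z \<in> words_over {..n}" "in_cyclic c z" and L: "reduced_syllables n m c d L"
    and W_eq: "amal_eq c d W (emb_l z @ flat_syllables L)"
    using normal_form_exists[OF c_word d_word W(1)] unfolding has_normal_form_def by blast
  show ?thesis
  proof (cases "L = []")
    case True
    have "act \<sigma> W \<noteq> id" if "\<sigma> \<in> conjugators" for \<sigma>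
    proof
      assume "act \<sigma> W = id"
      then have "eval_word \<rho> z = id"
        using act_amal_eq[OF that W_eq] True by (simp add: eval_word_gamma_emb_l)
      then have "amal_eq c d (emb_l z) (emb_l [])"
        using faithful[OF z(1)] by (intro amal_eq_if_fr_eq emb_l_fr_eq)
      then show False
        using W(2) W_eq True amal_eq_trans by auto
    qed
    then have "{\<sigma>\<in>conjugators. act \<sigma> W = id} = {}"
      by blast
    then show ?thesis
      by (simp only: interior_of_empty)
  next
    case False
    let ?T = "subtopology symtop conjugators" and ?B = "{\<sigma>\<in>conjugators. act \<sigma> W = id}"
    have False if \<sigma>: "\<sigma> \<in> ?T interior_of ?B" for \<sigma>
    proof -
      have interior_sub: "?T interior_of ?B \<subseteq> ?B"
        by (rule interior_of_subset)
      have "openin ?T (?T interior_of ?B)"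
        by simp
      then obtain F where "finite F"
        and F: "\<forall>\<sigma>'\<in>conjugators. (\<forall>x\<in>F. \<sigma>' x = \<sigma> x) \<longrightarrow> \<sigma>' \<in> ?T interior_of ?B"
        using \<sigma> unfolding openin_subtopology_symtop_iff[OF conjugators_bij] by blast
      have "\<sigma> \<in> conjugators"
        using \<sigma> interior_sub by blast
      then obtain \<sigma>' where \<sigma>': "\<sigma>' \<in> conjugators" "\<forall>x\<in>F. \<sigma>' x = \<sigma> x"
        and moved: "act \<sigma>' (emb_l z @ flat_syllables L) \<noteq> id"
        using conjugator_perturbation_normal_form[OF _ \<open>finite F\<close> z(2) L False] by blast
      then have "act \<sigma>' W = id"
        using F interior_sub by blast
      then show False
        using moved act_amal_eq[OF \<sigma>'(1) W_eq] by simp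
    qed
    then show ?thesis
      by blast
  qed
qed

lemma closedin_act_trivial:
  "closedin (subtopology symtop conjugators) {\<sigma>\<in>conjugators. act \<sigma> W = id}"
  by (rule closedin_gamma_trivial[OF conjugators_bij bij_\<rho>'])

end

lemma generic_in_if_nowhere_dense_cover:
  fixes B :: "'i::countable \<Rightarrow> 'a set"
  assumes "S \<subseteq> topspace T" and "\<And>i. closedin T (B i)" and "\<And>i. T interior_of B i = {}"
    and "topspace T - S = (\<Union>i. B i)"
  shows "generic_in T S"
proof -
  have "(\<Union>k. B (from_nat k)) = (\<Union>i. B i)"
    by (auto, metis from_nat_to_nat)
  then show ?thesis
    unfolding generic_in_def using assms by (intro conjI exI[of _ "B \<circ> from_nat"]) auto
qed

theorem proposition12:
  fixes n m :: nat and \<alpha> \<alpha>' :: "nat \<Rightarrow> int \<Rightarrow> int" and c d :: "nat letter list"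
    and Z :: "(int \<Rightarrow> int) set"
  assumes "n \<ge> 1" and "m \<ge> 1"
    and "c \<in> words_over {..n}" and "c \<noteq> []" and "cyc_reduced c" and "exp_sum n c = 0"
    and "d \<in> words_over {..m}" and "d \<noteq> []" and "cyc_reduced d" and "exp_sum m d = 0"
    and "\<forall>i<n. bij (\<alpha> i)" and "\<forall>j<m. bij (\<alpha>' j)"
    and "good_action n (fgen n \<alpha>) c"
    and "good_action m (fgen m \<alpha>') d"
    and "Z = {\<sigma>. bij \<sigma> \<and> \<sigma> \<circ> eval_word (fgen n \<alpha>) c = eval_word (fgen m \<alpha>') d \<circ> \<sigma>}"
  shows "generic_in (subtopology symtop Z)
           {\<sigma>\<in>Z. gamma_faithful n m (fgen n \<alpha>) (fgen m \<alpha>') c d \<sigma>}"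
proof -
  interpret amalgam_conjugation n m "fgen n \<alpha>" "fgen m \<alpha>'" c d
  proof
    show "bij (fgen n \<alpha> i)" "bij (fgen m \<alpha>' j)" for i j
      using assms(11,12) by (simp_all add: bij_fgen)
  qed (use assms(3,7,13,14) in \<open>auto simp: good_action_def Let_def displaced_def\<close>)
  have Z: "Z = conjugators"
    unfolding conjugators_def by (rule assms(15))
  define B where "B W = (if W \<in> words_over (Inl ` {..n} \<union> Inr ` {..m}) \<and> \<not> amal_eq c d W []
    then {\<sigma>\<in>Z. act \<sigma> W = id} else {})" for W
  show ?thesis
  proof (rule generic_in_if_nowhere_dense_cover[where B = B])
    show "closedin (subtopology symtop Z) (B W)" and "subtopology symtop Z interior_of B W = {}" for W
      unfolding B_def Z using closedin_act_trivial interior_act_trivial_empty by simp_all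
    show "{\<sigma>\<in>Z. gamma_faithful n m (fgen n \<alpha>) (fgen m \<alpha>') c d \<sigma>} \<subseteq> topspace (subtopology symtop Z)"
      and "topspace (subtopology symtop Z) - {\<sigma>\<in>Z. gamma_faithful n m (fgen n \<alpha>) (fgen m \<alpha>') c d \<sigma>}
        = (\<Union>W. B W)"
      unfolding topspace_subtopology_symtop[OF conjugators_bij] Z B_def gamma_faithful_def
      by auto
  qed
qed

end
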